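(* Let $u,a,b$ be positive integers with $u\le\min(a-1,b)$. Suppose integers $c_{pq},d_{pq}\in[1,a]$ ($1\le p\le u$, $1\le q\le b$) satisfy, for all $p,q$ for which the indices are in range, $$d_{pq}\ge c_{pq},\qquad c_{pq}\ge d_{p,q+1},\qquad c_{pq}>d_{p-1,q}.$$ Then there exist integers $c'_{pq},d'_{pq}$ ($1\le p\le u$, $1\le q\le b$) such that: (i) $d'_{pq}\ge c'_{pq}$ and $c'_{pq}>d'_{p-1,q}$ for all $p,q$ with indices in range; (ii) $c'_{pq}=d'_{p,q+1}$ for $1\le p\le u$, $1\le q\le b-1$; (iii) $d'_{p1}=a-u+p$ and $c'_{pb}=p$ for $1\le p\le u$; (iv) $\bigcup_p([c_{pq},d_{pq}]\cap\mathbb{Z})\subseteq\bigcup_p([c'_{pq},d'_{pq}]\cap\mathbb{Z})$ for each $q=1,\dots,b$; moreover, if this inclusion is an equality for every $q$, then $c_{pq}=c'_{pq}$ and $d_{pq}=d'_{pq}$ for all $p,q$. *)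

theory Defs
  imports Main
begin

definition hyp_ineqs :: "nat \<Rightarrow> nat \<Rightarrow> (nat \<Rightarrow> nat \<Rightarrow> int) \<Rightarrow> (nat \<Rightarrow> nat \<Rightarrow> int) \<Rightarrow> bool" where
  "hyp_ineqs u b c d \<longleftrightarrow>
     (\<forall>p\<in>{1..u}. \<forall>q\<in>{1..b}. d p q \<ge> c p q) \<and>
     (\<forall>p\<in>{1..u}. \<forall>q\<in>{1..b}. q + 1 \<le> b \<longrightarrow> c p q \<ge> d p (q + 1)) \<and>
     (\<forall>p\<in>{1..u}. \<forall>q\<in>{1..b}. 2 \<le> p \<longrightarrow> c p q > d (p - 1) q)"

definition col_union :: "nat \<Rightarrow> (nat \<Rightarrow> nat \<Rightarrow> int) \<Rightarrow> (nat \<Rightarrow> nat \<Rightarrow> int) \<Rightarrow> nat \<Rightarrow> int set" where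
  "col_union u c d q = (\<Union>p\<in>{1..u}. {c p q .. d p q})"

end

theory Submission
  imports Defs
begin

text \<open>
  The intervals in column q are disjoint, and in row p the lengths telescope: since
  d p 1 \<le> a - u + p, c p b \<ge> p and c p q \<ge> d p (q + 1), they sum to at most a - u + b, with
  equality exactly when the row satisfies (ii) and (iii). So the total number of covered
  points, summed over all columns, is at most u (a - u + b), with equality iff (ii) and (iii)
  hold. If they hold already, take c' = c and d' = d. Otherwise build a configuration with
  (i)-(iii) whose column unions contain the old ones; it attains the maximal total, so the
  column unions cannot all be equal and the last claim holds vacuously.

  Such a configuration is one decreasing sequence per row,
  a - u + p = boundary p 0 \<ge> \<dots> \<ge> boundary p b = p, with c' p q = boundary p q and
  d' p q = boundary p (q - 1).
  A point x of column q is covered by the first row r whose interval reaches x.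
\<close>

lemma strict_chain_gap:
  fixes f :: "nat \<Rightarrow> int"
  assumes increasing: "\<And>p. i < p \<Longrightarrow> p \<le> j \<Longrightarrow> f (p - 1) < f p" and "i \<le> j"
  shows "f i + int (j - i) \<le> f j"
  using \<open>i \<le> j\<close>
proof (induction j rule: dec_induct)
  case (step n)
  with increasing[of "Suc n"] show ?case by simp
qed simp

lemma card_UN_chain_intervals:
  fixes lo hi :: "nat \<Rightarrow> int"
  assumes le: "\<And>p. p \<in> {1..n} \<Longrightarrow> lo p \<le> hi p"
    and gap: "\<And>p. p \<in> {2..n} \<Longrightarrow> hi (p - 1) < lo p"
  shows "int (card (\<Union>p\<in>{1..n}. {lo p..hi p})) = (\<Sum>p=1..n. hi p - lo p + 1)"
proof -
  have hi_less_lo: "hi i < lo j" if "1 \<le> i" "i < j" "j \<le> n" for i j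
  proof -
    have "hi i + int (j - 1 - i) \<le> hi (j - 1)"
    proof (rule strict_chain_gap)
      fix p assume "i < p" "p \<le> j - 1"
      with that have "p \<in> {2..n}" by auto
      then show "hi (p - 1) < hi p" using gap[of p] le[of p] by force
    qed (use that in simp)
    then show ?thesis using gap[of j] that by simp
  qed
  have "card (\<Union>p\<in>{1..n}. {lo p..hi p}) = (\<Sum>p=1..n. card {lo p..hi p})"
  proof (rule card_UN_disjoint)
    show "\<forall>i\<in>{1..n}. \<forall>j\<in>{1..n}. i \<noteq> j \<longrightarrow> {lo i..hi i} \<inter> {lo j..hi j} = {}"
      using hi_less_lo by (fastforce simp: neq_iff)
  qed auto
  then show ?thesis using le by simp
qed

lemma sum_interval_lengths_telescope:
  fixes lo hi :: "nat \<Rightarrow> int"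
  shows "(\<Sum>q=1..Suc m. hi q - lo q + 1) = int (Suc m) + hi 1 - lo (Suc m) - (\<Sum>q=1..m. lo q - hi (q + 1))"
  by (induction m) simp_all

locale interval_array =
  fixes u a b :: nat and c d :: "nat \<Rightarrow> nat \<Rightarrow> int"
  assumes u_pos: "1 \<le> u" and u_less_a: "u < a" and u_le_b: "u \<le> b"
    and c_ge_1: "\<And>p q. p \<in> {1..u} \<Longrightarrow> q \<in> {1..b} \<Longrightarrow> 1 \<le> c p q"
    and d_le_a: "\<And>p q. p \<in> {1..u} \<Longrightarrow> q \<in> {1..b} \<Longrightarrow> d p q \<le> int a"
    and ineqs: "hyp_ineqs u b c d"
begin

lemma c_le_d: "p \<in> {1..u} \<Longrightarrow> q \<in> {1..b} \<Longrightarrow> c p q \<le> d p q"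
  using ineqs unfolding hyp_ineqs_def by blast

lemma d_Suc_le_c: "p \<in> {1..u} \<Longrightarrow> q \<in> {1..<b} \<Longrightarrow> d p (Suc q) \<le> c p q"
  using ineqs unfolding hyp_ineqs_def by auto

lemma d_less_c: "p \<in> {2..u} \<Longrightarrow> q \<in> {1..b} \<Longrightarrow> d (p - 1) q < c p q"
  using ineqs unfolding hyp_ineqs_def by auto

lemma d_Suc_le_d: "p \<in> {1..u} \<Longrightarrow> q \<in> {1..<b} \<Longrightarrow> d p (Suc q) \<le> d p q"
  using d_Suc_le_c c_le_d by fastforce

lemma index_le_c:
  assumes "p \<in> {1..u}" "q \<in> {1..b}"
  shows "int p \<le> c p q"
proof -
  have "c 1 q + int (p - 1) \<le> c p q"
  proof (rule strict_chain_gap)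
    fix n assume "1 < n" "n \<le> p"
    then show "c (n - 1) q < c n q"
      using c_le_d[of "n - 1" q] d_less_c[of n q] assms by fastforce
  qed (use assms in simp)
  then show ?thesis using c_ge_1[of 1 q] assms by simp
qed

lemma d_chain_gap:
  assumes "1 \<le> p'" "p' \<le> p" "p \<le> u" "q \<in> {1..b}"
  shows "d p' q + int (p - p') \<le> d p q"
proof (rule strict_chain_gap)
  fix n assume "p' < n" "n \<le> p"
  then show "d (n - 1) q < d n q"
    using c_le_d[of n q] d_less_c[of n q] assms by fastforce
qed (use assms in simp)

lemma d_mono_row: "1 \<le> p' \<Longrightarrow> p' \<le> p \<Longrightarrow> p \<le> u \<Longrightarrow> q \<in> {1..b} \<Longrightarrow> d p' q \<le> d p q"
  using d_chain_gap by fastforce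

lemma d_le_top:
  assumes "p \<in> {1..u}" "q \<in> {1..b}"
  shows "d p q \<le> int a - int u + int p"
  using d_chain_gap[of p u q] d_le_a[of u q] assms by simp

lemma card_col_union:
  "q \<in> {1..b} \<Longrightarrow> int (card (col_union u c d q)) = (\<Sum>p=1..u. d p q - c p q + 1)"
  unfolding col_union_def by (rule card_UN_chain_intervals) (use c_le_d d_less_c in auto)

definition row_defect :: "nat \<Rightarrow> int" where
  "row_defect p = (int a - int u + int p - d p 1) + (c p b - int p)
     + (\<Sum>q=1..b - 1. c p q - d p (q + 1))"

lemma row_length_sum: "(\<Sum>q=1..b. d p q - c p q + 1) = int a - int u + int b - row_defect p"
proof -
  obtain m where b: "b = Suc m" using u_pos u_le_b by (cases b) auto
  show ?thesis
    using sum_interval_lengths_telescope[where lo = "c p" and hi = "d p" and m = m]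
    unfolding row_defect_def by (simp add: b)
qed

lemma row_defect_eq_0_iff:
  assumes "p \<in> {1..u}"
  shows "row_defect p = 0 \<longleftrightarrow>
    d p 1 = int a - int u + int p \<and> c p b = int p \<and> (\<forall>q\<in>{1..b - 1}. c p q = d p (q + 1))"
proof -
  have b: "1 \<in> {1..b}" "b \<in> {1..b}" using u_pos u_le_b by auto
  have gaps: "0 \<le> c p q - d p (q + 1)" if "q \<in> {1..b - 1}" for q
    using d_Suc_le_c[OF assms, of q] that by fastforce
  have "(\<Sum>q=1..b - 1. c p q - d p (q + 1)) = 0 \<longleftrightarrow> (\<forall>q\<in>{1..b - 1}. c p q = d p (q + 1))"
    using gaps by (subst sum_nonneg_eq_0_iff) auto
  moreover have "0 \<le> (\<Sum>q=1..b - 1. c p q - d p (q + 1))" using gaps by (rule sum_nonneg)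
  moreover have "d p 1 \<le> int a - int u + int p" "int p \<le> c p b"
    using d_le_top[OF assms b(1)] index_le_c[OF assms b(2)] .
  ultimately show ?thesis unfolding row_defect_def by linarith
qed

lemma row_defect_nonneg: "p \<in> {1..u} \<Longrightarrow> 0 \<le> row_defect p"
  using d_le_top[of p 1] index_le_c[of p b] d_Suc_le_c[of p] u_pos u_le_b
  unfolding row_defect_def by (fastforce intro!: add_nonneg_nonneg sum_nonneg)

lemma total_card:
  "(\<Sum>q=1..b. int (card (col_union u c d q)))
     = int u * (int a - int u + int b) - (\<Sum>p=1..u. row_defect p)"
proof -
  have "(\<Sum>q=1..b. int (card (col_union u c d q))) = (\<Sum>q=1..b. \<Sum>p=1..u. d p q - c p q + 1)"
    by (rule sum.cong) (simp_all add: card_col_union)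
  also have "\<dots> = (\<Sum>p=1..u. \<Sum>q=1..b. d p q - c p q + 1)" by (rule sum.swap)
  also have "\<dots> = (\<Sum>p=1..u. int a - int u + int b - row_defect p)"
    by (rule sum.cong[OF refl], rule row_length_sum)
  finally show ?thesis by (simp add: sum_subtractf)
qed

lemma total_card_eq_iff:
  "(\<Sum>q=1..b. int (card (col_union u c d q))) = int u * (int a - int u + int b) \<longleftrightarrow>
     (\<forall>p\<in>{1..u}. \<forall>q\<in>{1..b - 1}. c p q = d p (q + 1)) \<and>
     (\<forall>p\<in>{1..u}. d p 1 = int a - int u + int p \<and> c p b = int p)"
  (is "?total \<longleftrightarrow> ?tight")
proof -
  have "?total \<longleftrightarrow> (\<Sum>p=1..u. row_defect p) = 0"
    unfolding total_card by simp
  also have "\<dots> \<longleftrightarrow> (\<forall>p\<in>{1..u}. row_defect p = 0)"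
    using row_defect_nonneg by (subst sum_nonneg_eq_0_iff) auto
  also have "\<dots> \<longleftrightarrow> ?tight"
    using row_defect_eq_0_iff by auto
  finally show ?thesis .
qed

text \<open>
  For k < p and for b + p \<le> k + u the value is forced by (iii) and the strict diagonal
  inequality; in between it is the least value that covers d p (k + 1) and exceeds the
  diagonal predecessor. Row 0 is a sentinel, which makes the recursion uniform at p = 1.
\<close>
fun boundary :: "nat \<Rightarrow> nat \<Rightarrow> int" where
  "boundary 0 k = 0"
| "boundary (Suc p) k =
     (if k \<le> p then int a - int u + int (Suc p)
      else if b + Suc p \<le> k + u then int (Suc p)
      else max (d (Suc p) (Suc k)) (boundary p (k - 1) + 1))"

declare boundary.simps(2) [simp del]

lemma boundary_top: "k < p \<Longrightarrow> boundary p k = int a - int u + int p"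
  by (cases p) (simp_all add: boundary.simps(2))

lemma boundary_bottom: "b + p \<le> k + u \<Longrightarrow> boundary p k = int p"
  using u_le_b by (cases p) (simp_all add: boundary.simps(2))

lemma boundary_middle:
  "1 \<le> p \<Longrightarrow> p \<le> k \<Longrightarrow> k + u < b + p
     \<Longrightarrow> boundary p k = max (d p (Suc k)) (boundary (p - 1) (k - 1) + 1)"
  by (cases p) (simp_all add: boundary.simps(2))

lemma boundary_cases:
  obtains (top) "k < p" | (bottom) "b + p \<le> k + u" | (middle) "p \<le> k" "k + u < b + p"
  by fastforce

lemma index_le_boundary: "int p \<le> boundary p k"
proof (induction p arbitrary: k)
  case (Suc p)
  show ?case
  proof (cases k "Suc p" rule: boundary_cases)
    case middle
    then show ?thesis using Suc.IH[of "k - 1"] by (simp add: boundary_middle)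
  qed (use u_less_a in \<open>simp_all add: boundary_top boundary_bottom\<close>)
qed simp

lemma boundary_le_top: "p \<le> u \<Longrightarrow> boundary p k \<le> int a - int u + int p"
proof (induction p arbitrary: k)
  case (Suc p)
  then show ?case
  proof (cases k "Suc p" rule: boundary_cases)
    case middle
    then have "d (Suc p) (Suc k) \<le> int a - int u + int (Suc p)"
      using Suc.prems by (intro d_le_top) auto
    with middle Suc.IH[of "k - 1"] Suc.prems show ?thesis by (simp add: boundary_middle)
  qed (use u_less_a in \<open>simp_all add: boundary_top boundary_bottom\<close>)
qed (use u_less_a in simp)

lemma boundary_Suc_le: "p \<le> u \<Longrightarrow> Suc k \<le> b \<Longrightarrow> boundary p (Suc k) \<le> boundary p k"
proof (induction p arbitrary: k)
  case (Suc p)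
  show ?case
  proof (cases k "Suc p" rule: boundary_cases)
    case top
    then show ?thesis using boundary_le_top[OF Suc.prems(1)] by (simp add: boundary_top)
  next
    case bottom
    then show ?thesis by (simp add: boundary_bottom)
  next
    case middle
    show ?thesis
    proof (cases "b + Suc p \<le> Suc k + u")
      case True
      then show ?thesis using index_le_boundary[of "Suc p" k] by (simp add: boundary_bottom)
    next
      case False
      have "boundary (Suc p) (Suc k) = max (d (Suc p) (Suc (Suc k))) (boundary p k + 1)"
        using False middle by (simp add: boundary_middle)
      also have "\<dots> \<le> max (d (Suc p) (Suc k)) (boundary p (k - 1) + 1)"
      proof (rule max.mono)
        show "d (Suc p) (Suc (Suc k)) \<le> d (Suc p) (Suc k)"
          using Suc.prems False by (intro d_Suc_le_d) auto
        show "boundary p k + 1 \<le> boundary p (k - 1) + 1"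
          using Suc.IH[of "k - 1"] Suc.prems middle by simp
      qed
      also have "\<dots> = boundary (Suc p) k" using middle by (simp add: boundary_middle)
      finally show ?thesis .
    qed
  qed
qed simp

lemma boundary_less_diag: "Suc p \<le> u \<Longrightarrow> boundary p k < boundary (Suc p) (Suc k)"
proof (cases "Suc k" "Suc p" rule: boundary_cases)
  case top
  then show ?thesis using boundary_le_top[of p k] by (simp add: boundary_top)
next
  case bottom
  then show ?thesis by (simp add: boundary_bottom)
next
  case middle
  then show ?thesis by (simp add: boundary_middle)
qed

lemma d_Suc_le_boundary:
  assumes "p \<in> {1..u}" "k + u < b + p"
  shows "d p (Suc k) \<le> boundary p k"
proof (cases k p rule: boundary_cases)
  case top
  then show ?thesis using d_le_top[of p "Suc k"] assms by (simp add: boundary_top)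
next
  case bottom
  with assms show ?thesis by simp
next
  case middle
  with assms show ?thesis by (simp add: boundary_middle)
qed

lemma boundary_cover:
  assumes p: "p \<in> {1..u}" and q: "q \<in> {1..b}" and x: "c p q \<le> x" "x \<le> d p q"
  shows "\<exists>r\<in>{1..u}. boundary r q \<le> x \<and> x \<le> boundary r (q - 1)"
proof -
  have "d p q \<le> d u q" using p q by (intro d_mono_row) auto
  moreover have "d u (Suc (q - 1)) \<le> boundary u (q - 1)"
    using u_pos q by (intro d_Suc_le_boundary) auto
  ultimately have "x \<le> boundary u (q - 1)" using x q by simp
  then obtain r where "r \<le> u" and least: "\<forall>i<r. \<not> x \<le> boundary i (q - 1)"
    and above: "x \<le> boundary r (q - 1)"
    using ex_least_nat_le[of "\<lambda>r. x \<le> boundary r (q - 1)"] by blast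
  have x_pos: "1 \<le> x" using c_ge_1[OF p q] x by simp
  then have "1 \<le> r" using above by (cases r) auto
  then have below: "boundary (r - 1) (q - 1) < x" using least[rule_format, of "r - 1"] by simp
  have "boundary r q \<le> x"
  proof (cases q r rule: boundary_cases)
    case top
    then have "boundary (r - 1) (q - 1) = int a - int u + int (r - 1)"
      using q by (intro boundary_top) auto
    then show ?thesis using top below \<open>1 \<le> r\<close> by (simp add: boundary_top of_nat_diff)
  next
    case bottom
    then show ?thesis using below index_le_boundary[of "r - 1" "q - 1"] \<open>1 \<le> r\<close>
      by (simp add: boundary_bottom of_nat_diff)
  next
    case middle
    have "d r (Suc q) \<le> x"
    proof (cases "r \<le> p")
      case True
      then have "d r (Suc q) \<le> d p (Suc q)" using middle p q \<open>1 \<le> r\<close> by (intro d_mono_row) auto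
      also have "\<dots> \<le> c p q" using middle p q \<open>r \<le> u\<close> by (intro d_Suc_le_c) auto
      finally show ?thesis using x by simp
    next
      case False
      then have "d p q \<le> d (r - 1) q" using p q \<open>r \<le> u\<close> by (intro d_mono_row) auto
      also have "\<dots> = d (r - 1) (Suc (q - 1))" using q by simp
      also have "\<dots> \<le> boundary (r - 1) (q - 1)"
        using False middle p q \<open>r \<le> u\<close> by (intro d_Suc_le_boundary) auto
      finally show ?thesis using below x by simp
    qed
    then show ?thesis using below middle \<open>1 \<le> r\<close> by (simp add: boundary_middle)
  qed
  then show ?thesis using \<open>1 \<le> r\<close> \<open>r \<le> u\<close> above by auto
qed

lemma col_union_subset_boundary:
  assumes "q \<in> {1..b}"
  shows "col_union u c d q \<subseteq> col_union u boundary (\<lambda>p q. boundary p (q - 1)) q"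
proof
  fix x assume "x \<in> col_union u c d q"
  then obtain p where "p \<in> {1..u}" "c p q \<le> x" "x \<le> d p q" unfolding col_union_def by auto
  with boundary_cover assms obtain r where "r \<in> {1..u}" "boundary r q \<le> x" "x \<le> boundary r (q - 1)"
    by blast
  then show "x \<in> col_union u boundary (\<lambda>p q. boundary p (q - 1)) q" unfolding col_union_def by auto
qed

lemma interval_array_boundary: "interval_array u a b boundary (\<lambda>p q. boundary p (q - 1))"
proof
  fix p q assume p: "p \<in> {1..u}"
  show "1 \<le> boundary p q" using index_le_boundary[of p q] p by simp
  show "boundary p (q - 1) \<le> int a" using boundary_le_top[of p "q - 1"] p by simp
next
  have "boundary p q \<le> boundary p (q - 1)" if "p \<in> {1..u}" "q \<in> {1..b}" for p q
    using boundary_Suc_le[of p "q - 1"] that by simp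
  moreover have "boundary (p - 1) (q - 1) < boundary p q" if "p \<in> {2..u}" "q \<in> {1..b}" for p q
    using boundary_less_diag[of "p - 1" "q - 1"] that by simp
  ultimately show "hyp_ineqs u b boundary (\<lambda>p q. boundary p (q - 1))"
    unfolding hyp_ineqs_def by auto
qed (use u_pos u_less_a u_le_b in auto)

end

theorem lemma2p9:
  fixes u a b :: nat and c d :: "nat \<Rightarrow> nat \<Rightarrow> int"
  assumes "u \<ge> 1" and "a \<ge> 1" and "b \<ge> 1"
    and "u \<le> min (a - 1) b"
    and "\<forall>p\<in>{1..u}. \<forall>q\<in>{1..b}. 1 \<le> c p q \<and> c p q \<le> int a"
    and "\<forall>p\<in>{1..u}. \<forall>q\<in>{1..b}. 1 \<le> d p q \<and> d p q \<le> int a"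
    and "hyp_ineqs u b c d"
  shows "\<exists>c' d' :: nat \<Rightarrow> nat \<Rightarrow> int.
     (\<forall>p\<in>{1..u}. \<forall>q\<in>{1..b}. d' p q \<ge> c' p q) \<and>
     (\<forall>p\<in>{1..u}. \<forall>q\<in>{1..b}. 2 \<le> p \<longrightarrow> c' p q > d' (p - 1) q) \<and>
     (\<forall>p\<in>{1..u}. \<forall>q\<in>{1..b - 1}. c' p q = d' p (q + 1)) \<and>
     (\<forall>p\<in>{1..u}. d' p 1 = int a - int u + int p \<and> c' p b = int p) \<and>
     (\<forall>q\<in>{1..b}. col_union u c d q \<subseteq> col_union u c' d' q) \<and>
     ((\<forall>q\<in>{1..b}. col_union u c d q = col_union u c' d' q) \<longrightarrow>
        (\<forall>p\<in>{1..u}. \<forall>q\<in>{1..b}. c p q = c' p q \<and> d p q = d' p q))"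
proof -
  interpret old: interval_array u a b c d
    using assms by unfold_locales auto
  let ?c' = old.boundary and ?d' = "\<lambda>p q. old.boundary p (q - 1)"
  interpret new: interval_array u a b ?c' ?d'
    by (rule old.interval_array_boundary)
  show ?thesis
  proof (cases "(\<forall>p\<in>{1..u}. \<forall>q\<in>{1..b - 1}. c p q = d p (q + 1)) \<and>
      (\<forall>p\<in>{1..u}. d p 1 = int a - int u + int p \<and> c p b = int p)")
    case True
    then show ?thesis using old.c_le_d old.d_less_c by (intro exI[of _ c] exI[of _ d]) auto
  next
    case False
    have new_tight: "(\<forall>p\<in>{1..u}. \<forall>q\<in>{1..b - 1}. ?c' p q = ?d' p (q + 1)) \<and>
        (\<forall>p\<in>{1..u}. ?d' p 1 = int a - int u + int p \<and> ?c' p b = int p)"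
      using old.boundary_top old.boundary_bottom by auto
    have "(\<Sum>q=1..b. int (card (col_union u c d q))) \<noteq> (\<Sum>q=1..b. int (card (col_union u ?c' ?d' q)))"
      using False new_tight old.total_card_eq_iff new.total_card_eq_iff by simp
    then have "\<not> (\<forall>q\<in>{1..b}. col_union u c d q = col_union u ?c' ?d' q)"
      using sum.cong[of "{1..b}" "{1..b}" "\<lambda>q. int (card (col_union u c d q))"] by force
    then show ?thesis
      using new.c_le_d new.d_less_c new_tight old.col_union_subset_boundary
      by (intro exI[of _ ?c'] exI[of _ ?d']) auto
  qed
qed

end
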